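(* Let $m,n\ge1$ and let $r$ be an integer with $\frac{\min\{m,n\}+2}{2}<r<\min\{m,n\}$. Then $\mathrm{Hrk}_r^\circ(m,n)=2$.
   Context: Work over $\mathbb{C}$. For projective varieties $X,Y\subset\mathbb{P}^N$, $X\star Y$ is the Zariski closure of the set of entrywise products $p\star q=[p_0q_0:\dots:p_Nq_N]$ ($p\in X,q\in Y$, defined); $X^{\star1}=X$, $X^{\star s}=X\star X^{\star(s-1)}$. $X_r\subset\mathbb{P}(\mathrm{Mat}_{m,n})$ is the variety of $m\times n$ matrices of rank at most $r$, and $\mathrm{Hrk}_r^\circ(m,n)=\min\{s\mid X_r^{\star s}=\mathbb{P}(\mathrm{Mat}_{m,n})\}$. *)

theory Defs
  imports "HOL-Analysis.Analysis"
begin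

inductive_set poly_fun :: "(complex^'n^'m \<Rightarrow> complex) set" where
  pf_const: "(\<lambda>A. c) \<in> poly_fun"
| pf_coord: "(\<lambda>A. A $ i $ j) \<in> poly_fun"
| pf_add: "p \<in> poly_fun \<Longrightarrow> q \<in> poly_fun \<Longrightarrow> (\<lambda>A. p A + q A) \<in> poly_fun"
| pf_mult: "p \<in> poly_fun \<Longrightarrow> q \<in> poly_fun \<Longrightarrow> (\<lambda>A. p A * q A) \<in> poly_fun"

definition zariski_closure :: "(complex^'n^'m) set \<Rightarrow> (complex^'n^'m) set" where
  "zariski_closure S = {x. \<forall>p\<in>poly_fun. (\<forall>y\<in>S. p y = 0) \<longrightarrow> p x = 0}"

definition hadamard :: "complex^'n^'m \<Rightarrow> complex^'n^'m \<Rightarrow> complex^'n^'m" where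
  "hadamard A B = (\<chi> i j. A $ i $ j * B $ i $ j)"

text \<open>Projective varieties are represented by their affine cones; the affine cone of
  X \<star> Y is the Zariski closure of the entrywise products of points of the cones.\<close>
definition star :: "(complex^'n^'m) set \<Rightarrow> (complex^'n^'m) set \<Rightarrow> (complex^'n^'m) set" where
  "star X Y = zariski_closure {hadamard A B | A B. A \<in> X \<and> B \<in> Y}"

fun star_pow :: "(complex^'n^'m) set \<Rightarrow> nat \<Rightarrow> (complex^'n^'m) set" where
  "star_pow X 0 = X"
| "star_pow X (Suc 0) = X"
| "star_pow X (Suc s) = star X (star_pow X s)"

definition rank_le :: "nat \<Rightarrow> (complex^'n^'m) set" where
  "rank_le r = {A. rank A \<le> r}"

definition hrk :: "(complex^'n^'m) set \<Rightarrow> nat" where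
  "hrk X = (LEAST s. s \<ge> 1 \<and> star_pow X s = UNIV)"

end

theory Submission
  imports Defs
begin

text \<open>Split the rows (or the columns) of an arbitrary matrix M into two halves of size at
  most r - 1. Keeping one half of M and replacing the other half by ones gives a
  matrix of rank at most r, and M is the Hadamard product of the two matrices obtained this
  way. Hence every matrix lies in X_r \<star> X_r, while X_r itself is proper because r is
  smaller than the maximal rank min m n. (Half of a side has size at most r - 1 exactly when
  min m n + 2 \<le> 2r.)\<close>

lemma rank_le_card_if_rows_in_span:
  fixes A :: "'a::field^'n^'m"
  assumes "finite S" "\<And>i. A $ i \<in> vec.span S"
  shows "rank A \<le> card S"
  unfolding row_rank_def_gen
  by (rule vec.dim_le_card) (auto simp: rows_def row_def assms vec_lambda_eta)

lemma rank_rows_if_le: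
  fixes A :: "'a::field^'n^'m"
  shows "rank (\<chi> i. if i \<in> I then A $ i else v) \<le> card I + 1"
proof -
  have "rank (\<chi> i. if i \<in> I then A $ i else v) \<le> card (insert v ((\<lambda>i. A $ i) ` I))"
    by (rule rank_le_card_if_rows_in_span) (auto intro: vec.span_base)
  also have "\<dots> \<le> card ((\<lambda>i. A $ i) ` I) + 1"
    by (simp add: card_insert_if)
  also have "\<dots> \<le> card I + 1"
    using card_image_le[of I "\<lambda>i. A $ i"] by simp
  finally show ?thesis .
qed

lemma restrict_in_span_axis:
  fixes x :: "'a::field^'n"
  shows "(\<chi> j. if j \<in> J then x $ j else 0) \<in> vec.span ((\<lambda>j. axis j 1) ` J)"
proof -
  have "(\<chi> j. if j \<in> J then x $ j else 0) = (\<Sum>j\<in>J. x $ j *s axis j 1)"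
    by (auto simp: vec_eq_iff sum_component axis_def if_distrib cong: if_cong)
  also have "\<dots> \<in> vec.span ((\<lambda>j. axis j 1) ` J)"
    by (intro vec.span_sum vec.span_scale vec.span_base) auto
  finally show ?thesis .
qed

lemma rank_columns_if_le:
  fixes A :: "'a::field^'n^'m"
  shows "rank (\<chi> i j. if j \<in> J then A $ i $ j else 1) \<le> card J + 1"
proof -
  define v :: "'a^'n" where "v = (\<chi> j. if j \<in> J then 0 else 1)"
  have "rank (\<chi> i j. if j \<in> J then A $ i $ j else 1)
          \<le> card (insert v ((\<lambda>j. axis j 1) ` J))"
  proof (rule rank_le_card_if_rows_in_span)
    fix i
    have row: "(\<chi> i j. if j \<in> J then A $ i $ j else 1) $ i
                 = (\<chi> j. if j \<in> J then A $ i $ j else 0) + v"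
      by (auto simp: vec_eq_iff v_def)
    show "(\<chi> i j. if j \<in> J then A $ i $ j else 1) $ i \<in> vec.span (insert v ((\<lambda>j. axis j 1) ` J))"
      unfolding row
      by (intro vec.span_add vec.span_base[of v]
            subsetD[OF vec.span_mono restrict_in_span_axis]) auto
  qed simp
  also have "\<dots> \<le> card ((\<lambda>j. axis j (1::'a)) ` J) + 1"
    by (simp add: card_insert_if)
  also have "\<dots> \<le> card J + 1"
    using card_image_le[of J "\<lambda>j. axis j (1::'a)"] by simp
  finally show ?thesis .
qed

lemma rank_rows_axis:
  fixes f :: "'m::finite \<Rightarrow> 'n::finite"
  shows "rank ((\<chi> i. axis (f i) 1) :: 'a::field^'n^'m) = card (range f)"
proof -
  have "rows ((\<chi> i. axis (f i) 1) :: 'a^'n^'m) = (\<lambda>j. axis j 1) ` range f"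
    by (auto simp: rows_def row_def vec_lambda_eta)
  moreover have "vec.independent ((\<lambda>j. axis j (1::'a)) ` range f)"
    by (rule vec.independent_mono[OF independent_cart_basis]) (auto simp: cart_basis_def)
  moreover have "card ((\<lambda>j. axis j (1::'a)) ` range f) = card (range f)"
    by (rule card_image) (auto simp: inj_on_def axis_eq_axis)
  ultimately show ?thesis
    unfolding row_rank_def_gen by (simp add: vec.dim_eq_card_independent)
qed

lemma exists_rank_ge_min_card:
  "\<exists>D :: 'a::field^'n^'m. min CARD('m) CARD('n) \<le> rank D"
proof (cases "CARD('m) \<le> CARD('n)")
  case True
  then obtain f :: "'m \<Rightarrow> 'n" where "inj f"
    using card_le_inj[of "UNIV :: 'm set" "UNIV :: 'n set"] by auto
  then have "rank ((\<chi> i. axis (f i) 1) :: 'a^'n^'m) = CARD('m)"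
    by (simp add: rank_rows_axis card_image)
  then show ?thesis by (metis min.cobounded1)
next
  case False
  then obtain g :: "'n \<Rightarrow> 'm" where "inj g"
    using card_le_inj[of "UNIV :: 'n set" "UNIV :: 'm set"] by auto
  then have "rank ((\<chi> i. axis (inv g i) 1) :: 'a^'n^'m) = CARD('n)"
    by (simp add: rank_rows_axis inj_imp_surj_inv)
  then show ?thesis by (metis min.cobounded2)
qed

lemma hadamard_factor_rows:
  fixes M :: "complex^'n^'m"
  assumes "CARD('m) + 2 \<le> 2 * r"
  shows "\<exists>A B. rank A \<le> r \<and> rank B \<le> r \<and> hadamard A B = M"
proof -
  obtain I :: "'m set" where I: "card I = CARD('m) div 2"
    using obtain_subset_with_card_n[of "CARD('m) div 2" "UNIV :: 'm set"] by auto
  have "card (- I) = CARD('m) - CARD('m) div 2"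
    using I by (simp add: Compl_eq_Diff_UNIV card_Diff_subset)
  then have small: "card I + 1 \<le> r" "card (- I) + 1 \<le> r"
    using I assms by linarith+
  define A :: "complex^'n^'m" where "A = (\<chi> i. if i \<in> I then M $ i else 1)"
  define B :: "complex^'n^'m" where "B = (\<chi> i. if i \<in> - I then M $ i else 1)"
  have "rank A \<le> r" "rank B \<le> r"
    using rank_rows_if_le[of I M 1] rank_rows_if_le[of "- I" M 1] small
    unfolding A_def B_def by linarith+
  moreover have "hadamard A B = M"
    by (auto simp: vec_eq_iff hadamard_def A_def B_def)
  ultimately show ?thesis by blast
qed

lemma hadamard_factor_columns:
  fixes M :: "complex^'n^'m"
  assumes "CARD('n) + 2 \<le> 2 * r"
  shows "\<exists>A B. rank A \<le> r \<and> rank B \<le> r \<and> hadamard A B = M"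
proof -
  obtain J :: "'n set" where J: "card J = CARD('n) div 2"
    using obtain_subset_with_card_n[of "CARD('n) div 2" "UNIV :: 'n set"] by auto
  have "card (- J) = CARD('n) - CARD('n) div 2"
    using J by (simp add: Compl_eq_Diff_UNIV card_Diff_subset)
  then have small: "card J + 1 \<le> r" "card (- J) + 1 \<le> r"
    using J assms by linarith+
  define A :: "complex^'n^'m" where "A = (\<chi> i j. if j \<in> J then M $ i $ j else 1)"
  define B :: "complex^'n^'m" where "B = (\<chi> i j. if j \<in> - J then M $ i $ j else 1)"
  have "rank A \<le> r" "rank B \<le> r"
    using rank_columns_if_le[of J M] rank_columns_if_le[of "- J" M] small
    unfolding A_def B_def by linarith+
  moreover have "hadamard A B = M"
    by (auto simp: vec_eq_iff hadamard_def A_def B_def)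
  ultimately show ?thesis by blast
qed

lemma subset_zariski_closure: "S \<subseteq> zariski_closure S"
  unfolding zariski_closure_def by blast

lemma star_eq_UNIV_if_hadamard_surj:
  assumes "\<And>M. \<exists>A\<in>X. \<exists>B\<in>Y. hadamard A B = M"
  shows "star X Y = UNIV"
proof -
  have "M \<in> {hadamard A B | A B. A \<in> X \<and> B \<in> Y}" for M
    using assms[of M] by blast
  then show ?thesis
    unfolding star_def using subset_zariski_closure by fast
qed

lemma hrk_eq_2I:
  assumes "X \<noteq> UNIV" "star X X = UNIV"
  shows "hrk X = 2"
  unfolding hrk_def
proof (rule Least_equality)
  show "1 \<le> (2::nat) \<and> star_pow X 2 = UNIV"
    using assms(2) by (simp add: numeral_2_eq_2)
next
  fix s :: nat
  assume "1 \<le> s \<and> star_pow X s = UNIV"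
  with assms(1) show "2 \<le> s"
    by (cases "s = 1") auto
qed

theorem mainTheorem14:
  fixes r :: nat
  assumes "real (min CARD('m) CARD('n)) + 2 < 2 * real r"
      and "r < min CARD('m) CARD('n)"
  shows "hrk (rank_le r :: (complex^'n^'m) set) = 2"
proof (rule hrk_eq_2I)
  obtain D :: "complex^'n^'m" where "min CARD('m) CARD('n) \<le> rank D"
    using exists_rank_ge_min_card by blast
  with assms(2) show "rank_le r \<noteq> (UNIV :: (complex^'n^'m) set)"
    unfolding rank_le_def by (metis UNIV_I leD le_less_trans mem_Collect_eq)
next
  have "CARD('m) + 2 \<le> 2 * r \<or> CARD('n) + 2 \<le> 2 * r"
    using assms(1) by (auto simp: min_def split: if_splits)
  then have "\<exists>A B. rank A \<le> r \<and> rank B \<le> r \<and> hadamard A B = M" for M :: "complex^'n^'m"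
    using hadamard_factor_rows hadamard_factor_columns by blast
  then show "star (rank_le r) (rank_le r) = (UNIV :: (complex^'n^'m) set)"
    by (intro star_eq_UNIV_if_hadamard_surj) (auto simp: rank_le_def)
qed

end
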